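(* Let $P\subseteq\mathbb{R}^2$ be a nonempty closed convex set such that $\tau P=P^{\circ}$. Then either $P$ is a line through the origin, or $P$ is bounded and full-dimensional.
   Context: $\tau:\mathbb{R}^2\to\mathbb{R}^2$ denotes the $90^\circ$ counterclockwise rotation. The polar of $P$ is $P^{\circ}=\{x\in\mathbb{R}^2: y^\top x\le 1\text{ for all }y\in P\}$. *)

theory Defs
  imports "HOL-Analysis.Analysis"
begin

definition rot90 :: "real^2 \<Rightarrow> real^2" where
  "rot90 x = (\<chi> i. if i = 1 then - (x $ 2) else x $ 1)"

definition polar :: "(real^2) set \<Rightarrow> (real^2) set" where
  "polar P = {x. \<forall>y\<in>P. y \<bullet> x \<le> 1}"

end

theory Submission
  imports Defs
begin

text \<open>Since \<open>y \<bullet> \<tau> x\<close> is the determinant \<open>[x, y]\<close>, the hypothesis \<open>\<tau> P = P\<degree>\<close> says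
  exactly that \<open>x \<in> P\<close> iff \<open>[x, y] \<le> 1\<close> for all \<open>y \<in> P\<close>. In particular \<open>0 \<in> P\<close>, and by
  antisymmetry \<open>|[x, y]| \<le> 1\<close> on \<open>P\<close>. If \<open>P\<close> contains \<open>a, b\<close> with \<open>[a, b] \<noteq> 0\<close>, Cramer's
  rule \<open>[a, b] y = [y, b] a + [a, y] b\<close> bounds \<open>P\<close>, and \<open>0, a, b\<close> span the plane. Otherwise all
  determinants on \<open>P\<close> vanish, so \<open>P\<close> lies on a line through \<open>0\<close> and contains every point of it;
  \<open>P = {0}\<close> is impossible because then \<open>P\<close> would be the whole plane.\<close>

definition cross2 :: "real^2 \<Rightarrow> real^2 \<Rightarrow> real" where
  "cross2 x y = x$1 * y$2 - x$2 * y$1"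

lemma inner_rot90: "y \<bullet> rot90 x = cross2 x y"
  by (simp add: inner_vec_def sum_2 rot90_def cross2_def algebra_simps)

lemma inj_rot90: "inj rot90"
  by (auto simp: inj_def rot90_def vec_eq_iff forall_2)

lemma cross2_commute: "cross2 y x = - cross2 x y"
  by (simp add: cross2_def algebra_simps)

lemma cross2_scaleR_left: "cross2 (c *\<^sub>R x) y = c * cross2 x y"
  by (simp add: cross2_def algebra_simps)

lemma cross2_zero_left [simp]: "cross2 0 y = 0"
  by (simp add: cross2_def)

lemma cross2_cramer: "cross2 a b *\<^sub>R y = cross2 y b *\<^sub>R a + cross2 a y *\<^sub>R b"
  by (simp add: cross2_def vec_eq_iff forall_2 algebra_simps)

lemma inner_self_scaleR_decompose:
  "(v \<bullet> v) *\<^sub>R y = (v \<bullet> y) *\<^sub>R v + cross2 v y *\<^sub>R rot90 v"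
  by (simp add: cross2_def rot90_def inner_vec_def sum_2 vec_eq_iff forall_2 algebra_simps)

lemma cross2_eq_0_iff:
  assumes "v \<noteq> 0"
  shows "cross2 v y = 0 \<longleftrightarrow> (\<exists>t. y = t *\<^sub>R v)"
proof
  assume "cross2 v y = 0"
  then have collinear: "(v \<bullet> v) *\<^sub>R y = (v \<bullet> y) *\<^sub>R v"
    using inner_self_scaleR_decompose[of v y] by simp
  have "y = (1 / (v \<bullet> v)) *\<^sub>R ((v \<bullet> v) *\<^sub>R y)"
    using assms by simp
  also have "\<dots> = ((v \<bullet> y) / (v \<bullet> v)) *\<^sub>R v"
    unfolding collinear by simp
  finally show "\<exists>t. y = t *\<^sub>R v" ..
next
  assume "\<exists>t. y = t *\<^sub>R v"
  then show "cross2 v y = 0"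
    by (auto simp: cross2_def)
qed

lemma independent_if_cross2_nonzero:
  assumes "cross2 a b \<noteq> 0"
  shows "independent {a, b}" and "a \<noteq> b"
proof -
  have "b \<noteq> 0" and "a \<noteq> b"
    using assms by (auto simp: cross2_def)
  moreover have "a \<notin> span {b}"
    using assms by (auto simp: span_singleton cross2_def)
  ultimately show "independent {a, b}" and "a \<noteq> b"
    by (simp_all add: independent_insert)
qed

lemma bounded_if_cross2_bounded:
  assumes "cross2 a b \<noteq> 0"
    and "\<And>y. y \<in> S \<Longrightarrow> \<bar>cross2 a y\<bar> \<le> C \<and> \<bar>cross2 y b\<bar> \<le> C"
  shows "bounded S"
  unfolding bounded_iff
proof (intro exI ballI)
  fix y assume "y \<in> S"
  then have C: "\<bar>cross2 a y\<bar> \<le> C" "\<bar>cross2 y b\<bar> \<le> C"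
    using assms(2) by auto
  have "\<bar>cross2 a b\<bar> * norm y = norm (cross2 y b *\<^sub>R a + cross2 a y *\<^sub>R b)"
    by (simp flip: cross2_cramer)
  also have "\<dots> \<le> \<bar>cross2 y b\<bar> * norm a + \<bar>cross2 a y\<bar> * norm b"
    using norm_triangle_ineq[of "cross2 y b *\<^sub>R a" "cross2 a y *\<^sub>R b"] by simp
  also have "\<dots> \<le> C * (norm a + norm b)"
    using C by (simp add: distrib_left add_mono mult_right_mono)
  finally show "norm y \<le> C * (norm a + norm b) / \<bar>cross2 a b\<bar>"
    using assms(1) by (simp add: field_simps)
qed

lemma aff_dim_eq_2_if_cross2_nonzero:
  fixes S :: "(real^2) set"
  assumes "0 \<in> S" "a \<in> S" "b \<in> S" "cross2 a b \<noteq> 0"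
  shows "aff_dim S = 2"
proof -
  have "card {a, b} \<le> dim S"
    using assms independent_if_cross2_nonzero(1)[OF assms(4)]
    by (intro independent_card_le_dim) auto
  then have "dim S \<ge> 2"
    using independent_if_cross2_nonzero(2)[OF assms(4)] by simp
  moreover have "aff_dim S = int (dim S)"
    using aff_dim_eq_dim[of 0 S] assms(1) hull_subset[of S affine] by auto
  moreover have "aff_dim S \<le> 2"
    using aff_dim_le_DIM[of S] by simp
  ultimately show ?thesis
    by simp
qed

lemma mem_iff_cross2_le_1_if_rot90_image_eq_polar:
  assumes "rot90 ` P = polar P"
  shows "x \<in> P \<longleftrightarrow> (\<forall>y\<in>P. cross2 x y \<le> 1)"
proof -
  have "x \<in> P \<longleftrightarrow> rot90 x \<in> rot90 ` P"
    using inj_rot90 by (simp add: inj_image_mem_iff)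
  also have "\<dots> \<longleftrightarrow> (\<forall>y\<in>P. cross2 x y \<le> 1)"
    by (simp add: assms polar_def inner_rot90)
  finally show ?thesis .
qed

theorem proposition2:
  fixes P :: "(real^2) set"
  assumes "P \<noteq> {}" and "closed P" and "convex P"
    and "rot90 ` P = polar P"
  shows "(\<exists>v. v \<noteq> 0 \<and> P = range (\<lambda>t::real. t *\<^sub>R v))
         \<or> (bounded P \<and> aff_dim P = 2)"
proof -
  note mem = mem_iff_cross2_le_1_if_rot90_image_eq_polar[OF assms(4)]
  consider (nondegenerate) a b where "a \<in> P" "b \<in> P" "cross2 a b \<noteq> 0"
    | (degenerate) "\<And>a b. a \<in> P \<Longrightarrow> b \<in> P \<Longrightarrow> cross2 a b = 0"
    by blast
  then show ?thesis
  proof cases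
    case nondegenerate
    have "\<bar>cross2 x y\<bar> \<le> 1" if "x \<in> P" "y \<in> P" for x y
    proof -
      have "cross2 x y \<le> 1" "cross2 y x \<le> 1"
        using that mem by blast+
      then show ?thesis
        unfolding cross2_commute[of y x] by linarith
    qed
    then have "bounded P"
      using nondegenerate by (intro bounded_if_cross2_bounded[of a b]) auto
    moreover have "0 \<in> P"
      by (rule mem[THEN iffD2]) simp
    then have "aff_dim P = 2"
      using nondegenerate by (rule aff_dim_eq_2_if_cross2_nonzero)
    ultimately show ?thesis
      by blast
  next
    case degenerate
    obtain v where "v \<in> P" "v \<noteq> 0"
    proof (cases "\<exists>v\<in>P. v \<noteq> 0")
      case False
      then have "(\<chi> i. 1) \<in> P"
        by (intro mem[THEN iffD2]) (auto simp: cross2_def)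
      with False have "(\<chi> i. 1) = (0 :: real^2)"
        by blast
      then show ?thesis
        by (simp add: vec_eq_iff)
    qed blast
    have "P \<subseteq> range (\<lambda>t. t *\<^sub>R v)"
      using degenerate[OF \<open>v \<in> P\<close>] cross2_eq_0_iff[OF \<open>v \<noteq> 0\<close>] by blast
    moreover have "t *\<^sub>R v \<in> P" for t
      by (rule mem[THEN iffD2]) (simp add: cross2_scaleR_left degenerate[OF \<open>v \<in> P\<close>])
    ultimately show ?thesis
      using \<open>v \<noteq> 0\<close> by blast
  qed
qed

end
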